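(* Let $X=[0,\infty)$, $K(x,y)=x\wedge y$ on $X\times X$, and let $0<x_1<x_2<\cdots$ be real numbers and $(y_j)_{j\in\mathbb{N}}$ real numbers. If $\sum_{j\in\mathbb{N}}(y_{j+1}-y_j)^2/(x_{j+1}-x_j)<\infty$, then there exists $f\in\mathscr{H}(K)$ with $f(x_j)=y_j$ for all $j\in\mathbb{N}$.
   Context: $\mathscr{H}(K)$ is the reproducing kernel Hilbert space of $K(x,y)=\min(x,y)$ on $[0,\infty)$; it consists of the functions $f$ on $[0,\infty)$ with $f(0)=0$ and distributional derivative $f'\in L^2([0,\infty))$, with $\|f\|^2_{\mathscr{H}(K)}=\int_0^\infty|f'(x)|^2dx$. *)

theory Defs
  imports "HOL-Analysis.Analysis"
begin

text \<open>The RKHS H(K) of K(x,y) = min x y on [0,\<infinity>): functions f with f(0) = 0 whose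
  (distributional) derivative g lies in L^2([0,\<infinity>)), i.e. f(x) = integral of g over [0,x]
  for all x \<ge> 0 (absolutely continuous representative). Values for x < 0 are irrelevant.\<close>
definition H_K :: "(real \<Rightarrow> real) set" where
  "H_K = {f. f 0 = 0 \<and>
     (\<exists>g. g \<in> borel_measurable (lebesgue_on {0..}) \<and>
          integrable (lebesgue_on {0..}) (\<lambda>t. (g t)\<^sup>2) \<and>
          (\<forall>x\<ge>0. f x = (LINT t:{0..x}|lebesgue. g t)))}"

end

theory Submission
  imports Defs
begin

text \<open>Interpolate piecewise linearly through the nodes \<open>(0, 0), (x\<^sub>0, y\<^sub>0), (x\<^sub>1, y\<^sub>1), \<dots>\<close>.
  The derivative is the step function with slope \<open>(y\<^sub>j\<^sub>+\<^sub>1 - y\<^sub>j) / (x\<^sub>j\<^sub>+\<^sub>1 - x\<^sub>j)\<close> on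
  \<open>[x\<^sub>j, x\<^sub>j\<^sub>+\<^sub>1)\<close> and \<open>y\<^sub>0 / x\<^sub>0\<close> on \<open>[0, x\<^sub>0)\<close>; its squared \<open>L\<^sup>2\<close> norm is \<open>y\<^sub>0\<^sup>2 / x\<^sub>0\<close> plus the
  given series, and its integral up to \<open>x\<^sub>j\<close> telescopes to \<open>y\<^sub>j\<close>.\<close>

definition step_fun :: "(nat \<Rightarrow> real) \<Rightarrow> (nat \<Rightarrow> real) \<Rightarrow> real \<Rightarrow> real" where
  "step_fun a c t = (\<Sum>j. c j * indicator {a j..<a (Suc j)} t)"

lemma disjoint_family_mono_intervals:
  fixes a :: "nat \<Rightarrow> 'a::linorder"
  assumes "mono a"
  shows "disjoint_family (\<lambda>j. {a j..<a (Suc j)})"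
  unfolding disjoint_family_on_def
proof (intro ballI impI)
  fix i j :: nat assume "i \<noteq> j"
  then consider "Suc i \<le> j" | "Suc j \<le> i" by linarith
  then show "{a i..<a (Suc i)} \<inter> {a j..<a (Suc j)} = {}"
    by cases (auto dest: monoD[OF assms])
qed

lemma step_fun_terms_sums:
  fixes a c :: "nat \<Rightarrow> real"
  assumes "mono a" "t \<in> {a j..<a (Suc j)}"
  shows "(\<lambda>i. c i * indicator {a i..<a (Suc i)} t) sums c j"
proof -
  have "(\<lambda>i. c i * indicator {a i..<a (Suc i)} t) sums (\<Sum>i\<in>{j}. c i * indicator {a i..<a (Suc i)} t)"
  proof (rule sums_finite)
    fix i assume "i \<notin> {j}"
    then have "t \<notin> {a i..<a (Suc i)}"
      using assms disjoint_family_onD[OF disjoint_family_mono_intervals[OF \<open>mono a\<close>]] by blast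
    then show "c i * indicator {a i..<a (Suc i)} t = 0" by simp
  qed simp
  with assms show ?thesis by simp
qed

lemma step_fun_eq:
  fixes a c :: "nat \<Rightarrow> real"
  assumes "mono a" "t \<in> {a j..<a (Suc j)}"
  shows "step_fun a c t = c j"
  unfolding step_fun_def using step_fun_terms_sums[OF assms] by (rule sums_unique[symmetric])

lemma sums_step_fun:
  fixes a c :: "nat \<Rightarrow> real"
  assumes "mono a"
  shows "(\<lambda>j. c j * indicator {a j..<a (Suc j)} t) sums step_fun a c t"
proof (cases "\<exists>j. t \<in> {a j..<a (Suc j)}")
  case True
  then obtain j where "t \<in> {a j..<a (Suc j)}" by blast
  with assms show ?thesis by (simp add: step_fun_terms_sums step_fun_eq)
next
  case False
  then show ?thesis by (simp add: step_fun_def)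
qed

lemma borel_measurable_step_fun:
  fixes a c :: "nat \<Rightarrow> real"
  assumes "mono a"
  shows "step_fun a c \<in> borel_measurable borel"
proof (rule borel_measurable_LIMSEQ_real)
  fix t show "(\<lambda>n. \<Sum>j<n. c j * indicator {a j..<a (Suc j)} t) \<longlonglongrightarrow> step_fun a c t"
    using sums_step_fun[OF assms] by (simp add: sums_def)
qed measurable

lemma power2_step_fun:
  fixes a c :: "nat \<Rightarrow> real"
  assumes "mono a"
  shows "(step_fun a c t)\<^sup>2 = step_fun a (\<lambda>j. (c j)\<^sup>2) t"
proof (cases "\<exists>j. t \<in> {a j..<a (Suc j)}")
  case True
  with assms show ?thesis by (auto simp: step_fun_eq)
next
  case False
  then show ?thesis by (simp add: step_fun_def)
qed

lemma indicator_Ico_mult_step_fun: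
  fixes a c :: "nat \<Rightarrow> real"
  assumes "mono a"
  shows "indicator {a 0..<a n} t * step_fun a c t = (\<Sum>j<n. c j * indicator {a j..<a (Suc j)} t)"
proof (cases "t \<in> {a 0..<a n}")
  case True
  have "step_fun a c t = (\<Sum>j<n. c j * indicator {a j..<a (Suc j)} t)"
    unfolding step_fun_def
  proof (rule suminf_finite)
    fix j assume "j \<notin> {..<n}"
    then have "a n \<le> a j" using monoD[OF assms] by simp
    with True show "c j * indicator {a j..<a (Suc j)} t = 0" by simp
  qed simp
  with True show ?thesis by simp
next
  case False
  have "t \<notin> {a j..<a (Suc j)}" if "j < n" for j
    using False monoD[OF assms, of 0 j] monoD[OF assms, of "Suc j" n] that by auto
  with False show ?thesis by simp
qed

lemma set_integral_step_fun:
  fixes a c :: "nat \<Rightarrow> real"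
  assumes "mono a"
  shows "(LINT t:{a 0..a n}|lebesgue. step_fun a c t) = (\<Sum>j<n. c j * (a (Suc j) - a j))"
proof -
  have meas: "(\<lambda>t. indicator {a 0..a n} t *\<^sub>R step_fun a c t) \<in> borel_measurable lborel"
    using borel_measurable_step_fun[OF assms] by simp
  have "(LINT t:{a 0..a n}|lebesgue. step_fun a c t)
      = integral\<^sup>L lborel (\<lambda>t. indicator {a 0..a n} t *\<^sub>R step_fun a c t)"
    unfolding set_lebesgue_integral_def using meas by (rule integral_completion)
  also have "\<dots> = integral\<^sup>L lborel (\<lambda>t. \<Sum>j<n. c j * indicator {a j..<a (Suc j)} t)"
  proof (rule integral_cong_AE)
    show "AE t in lborel. indicator {a 0..a n} t *\<^sub>R step_fun a c t
        = (\<Sum>j<n. c j * indicator {a j..<a (Suc j)} t)"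
    proof (rule AE_mp[OF AE_lborel_singleton[of "a n"]], intro AE_I2 impI)
      fix t assume "t \<noteq> a n"
      then have "indicator {a 0..a n} t = (indicator {a 0..<a n} t :: real)"
        by (auto simp: indicator_def)
      then show "indicator {a 0..a n} t *\<^sub>R step_fun a c t
          = (\<Sum>j<n. c j * indicator {a j..<a (Suc j)} t)"
        using indicator_Ico_mult_step_fun[OF assms] by simp
    qed
  qed (use meas in measurable)
  also have "\<dots> = (\<Sum>j<n. integral\<^sup>L lborel (\<lambda>t. c j * indicator {a j..<a (Suc j)} t))"
    using monoD[OF assms, of j "Suc j" for j]
    by (intro Bochner_Integration.integral_sum integrable_mult_right integrable_real_indicator) auto
  also have "\<dots> = (\<Sum>j<n. c j * (a (Suc j) - a j))"
    using monoD[OF assms, of j "Suc j" for j] by simp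
  finally show ?thesis .
qed

lemma nn_integral_step_fun:
  fixes a c :: "nat \<Rightarrow> real"
  assumes "mono a" "\<And>j. 0 \<le> c j"
  shows "(\<integral>\<^sup>+t. ennreal (step_fun a c t) \<partial>lborel) = (\<Sum>j. ennreal (c j * (a (Suc j) - a j)))"
proof -
  have "ennreal (step_fun a c t) = (\<Sum>j. ennreal (c j) * indicator {a j..<a (Suc j)} t)" for t
  proof -
    have "ennreal (step_fun a c t) = (\<Sum>j. ennreal (c j * indicator {a j..<a (Suc j)} t))"
      unfolding step_fun_def using assms(2) sums_summable[OF sums_step_fun[OF assms(1)]]
      by (simp add: suminf_ennreal2)
    then show ?thesis using assms(2) by (simp add: ennreal_mult' ennreal_indicator)
  qed
  then have "(\<integral>\<^sup>+t. ennreal (step_fun a c t) \<partial>lborel)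
      = (\<Sum>j. \<integral>\<^sup>+t. ennreal (c j) * indicator {a j..<a (Suc j)} t \<partial>lborel)"
    by (simp add: nn_integral_suminf)
  also have "\<dots> = (\<Sum>j. ennreal (c j * (a (Suc j) - a j)))"
    using monoD[OF assms(1), of j "Suc j" for j] assms(2)
    by (simp add: nn_integral_cmult_indicator ennreal_mult')
  finally show ?thesis .
qed

lemma integrable_step_fun:
  fixes a c :: "nat \<Rightarrow> real"
  assumes "mono a" "\<And>j. 0 \<le> c j" "summable (\<lambda>j. c j * (a (Suc j) - a j))"
  shows "integrable lborel (step_fun a c)"
proof (rule integrableI_nonneg)
  show "AE t in lborel. 0 \<le> step_fun a c t"
    using assms(1,2) by (simp add: step_fun_def suminf_nonneg sums_summable[OF sums_step_fun])
  have "(\<Sum>j. ennreal (c j * (a (Suc j) - a j))) < \<infinity>"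
    using assms monoD[OF assms(1), of j "Suc j" for j]
    by (simp add: suminf_ennreal2 top.not_eq_extremum)
  then show "(\<integral>\<^sup>+t. ennreal (step_fun a c t) \<partial>lborel) < \<infinity>"
    using nn_integral_step_fun[OF assms(1,2)] by simp
qed (use borel_measurable_step_fun[OF assms(1)] in simp)

lemma set_integral_lebesgue_singleton [simp]:
  fixes g :: "real \<Rightarrow> real"
  shows "(LINT t:{s}|lebesgue. g t) = 0"
proof -
  have "(\<lambda>t. indicator {s} t *\<^sub>R g t) = (\<lambda>t. indicator {s} t *\<^sub>R g s)"
    by (auto simp: indicator_def)
  then show ?thesis by (simp add: set_lebesgue_integral_def)
qed

lemma primitive_in_H_K:
  fixes g :: "real \<Rightarrow> real"
  assumes meas: "g \<in> borel_measurable borel" and square_int: "integrable lborel (\<lambda>t. (g t)\<^sup>2)"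
  shows "(\<lambda>s. LINT t:{0..s}|lebesgue. g t) \<in> H_K"
  unfolding H_K_def
proof (intro CollectI conjI exI[of _ g] allI impI)
  show "g \<in> borel_measurable (lebesgue_on {0..})"
    using meas by (intro measurable_restrict_space1 measurable_completion) simp
  have "(\<lambda>t. (g t)\<^sup>2) \<in> borel_measurable lborel"
    using meas by measurable
  then have "integrable lebesgue (\<lambda>t. (g t)\<^sup>2)"
    using square_int by (simp add: integrable_completion)
  then have "integrable lebesgue (\<lambda>t. indicator {0..} t *\<^sub>R (g t)\<^sup>2)"
    by (rule integrable_mult_indicator[rotated]) simp
  then show "integrable (lebesgue_on {0..}) (\<lambda>t. (g t)\<^sup>2)"
    by (simp add: integrable_restrict_space)
qed simp_all

theorem corollary10p7:
  fixes x y :: "nat \<Rightarrow> real"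
  assumes "0 < x 0"
    and "strict_mono x"
    and "summable (\<lambda>j. (y (Suc j) - y j)\<^sup>2 / (x (Suc j) - x j))"
  shows "\<exists>f \<in> H_K. \<forall>j. f (x j) = y j"
proof -
  define a where "a j = (case j of 0 \<Rightarrow> 0 | Suc k \<Rightarrow> x k)" for j
  define b where "b j = (case j of 0 \<Rightarrow> 0 | Suc k \<Rightarrow> y k)" for j
  define c where "c j = (b (Suc j) - b j) / (a (Suc j) - a j)" for j
  have a_strict: "a j < a (Suc j)" for j
    using assms(1,2) by (cases j) (simp_all add: a_def strict_mono_Suc_iff)
  then have a_mono: "mono a"
    by (simp add: incseq_SucI less_imp_le)
  have "(c (Suc j))\<^sup>2 * (a (Suc (Suc j)) - a (Suc j)) = (y (Suc j) - y j)\<^sup>2 / (x (Suc j) - x j)" for j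
    using a_strict[of "Suc j"] by (simp add: a_def b_def c_def power2_eq_square)
  then have "summable (\<lambda>j. (c j)\<^sup>2 * (a (Suc j) - a j))"
    using assms(3) summable_Suc_iff[where f = "\<lambda>j. (c j)\<^sup>2 * (a (Suc j) - a j)"] by simp
  then have square_integrable: "integrable lborel (\<lambda>t. (step_fun a c t)\<^sup>2)"
    by (simp add: power2_step_fun a_mono integrable_step_fun)
  define f where "f = (\<lambda>s. LINT t:{0..s}|lebesgue. step_fun a c t)"
  have "f \<in> H_K"
    unfolding f_def using square_integrable
    by (intro primitive_in_H_K borel_measurable_step_fun a_mono)
  moreover have "f (x j) = y j" for j
  proof -
    have "c i * (a (Suc i) - a i) = b (Suc i) - b i" for i
      using a_strict[of i] by (simp add: c_def)
    then have "(LINT t:{a 0..a (Suc j)}|lebesgue. step_fun a c t) = b (Suc j) - b 0"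
      by (simp add: set_integral_step_fun a_mono sum_lessThan_telescope)
    then show ?thesis by (simp add: f_def a_def b_def)
  qed
  ultimately show ?thesis by blast
qed

end
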